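(* Let $p\in\mathbb{T}^{\mathcal{P}([n])}$ be a tropical Wick vector with nonempty support, and let $M$ be the even $\Delta$-matroid whose collection of bases is $\operatorname{supp}(p)$. Then: (i) if $x\in\mathcal{C}(p)^\top$ has nonempty support, then $\operatorname{supp}(x)$ is a dependent subset in $M^*$; (ii) the cocycles of $p$ having minimal nonempty support (with respect to inclusion) are exactly the cocircuits of $p$; (iii) for any two cocircuits $c^*_1,c^*_2$ of $p$ with the same support there is $\lambda\in\mathbb{R}$ with $c^*_1=c^*_2+\lambda\mathbf{1}$.
   Context: $\mathbb{T}=\mathbb{R}\cup\{\infty\}$; $\mathcal{P}([n])$ the set of subsets of $[n]$. A tropical Wick vector is $p\in\mathbb{T}^{\mathcal{P}([n])}$ such that for all $S,T\subseteq[n]$ the minimum $\min_{i\in S\Delta T}(p_{S\Delta\{i\}}+p_{T\Delta\{i\}})$ is attained at least twice or equals $\infty$; $\operatorname{supp}(p)=\{S:p_S\ne\infty\}$, which (when nonempty) is the set of bases of an even $\Delta$-matroid $M$ on $[n]$. The dual $M^*$ has bases $\{[n]\setminus B: B \text{ a basis of } M\}$. Let $\mathcal{J}=\{1,\dots,n,1^*,\dots,n^*\}$ with involution $i\leftrightarrow i^*$ ($i^{**}=i$); $X\subseteq\mathcal{J}$ is admissible if $X\cap X^*=\emptyset$. For $S\subseteq[n]$ let $\bar S=S\cup\{i^*:i\in[n]\setminus S\}$, and $\bar p_{\bar S}:=p_S$. A subset $X\subseteq\mathcal{J}$ is dependent in $M^*$ if it is not contained in $\bar B$ for any basis $B$ of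 $M^*$. For $T\subseteq[n]$ define $c_T, c^*_T\in\mathbb{T}^{\mathcal{J}}$ by $(c_T)_i=\bar p_{\bar T\Delta\{i,i^*\}}$ if $i\in\bar T$, $\infty$ otherwise; $(c^*_T)_i=\bar p_{\bar T\Delta\{i,i^*\}}$ if $i\notin\bar T$, $\infty$ otherwise. Circuits of $p$: vectors $c_T+\lambda\mathbf{1}$, $\lambda\in\mathbb{R}$, with nonempty support; $\mathcal{C}(p)$ is the set of circuits. Cocircuits of $p$: vectors $c^*_T+\lambda\mathbf{1}$ with nonempty support. Here the support of a vector in $\mathbb{T}^{\mathcal{J}}$ is the set of coordinates $\neq\infty$. $x,y$ are tropically orthogonal if $\min_k(x_k+y_k)$ is attained at least twice or equals $\infty$; $\mathcal{C}(p)^\top$ is the set of vectors tropically orthogonal to all circuits. A vector is admissible if its support is admissible; a cocycle of $p$ is an admissible vector in $\mathcal{C}(p)^\top$. *)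

theory Defs
  imports "HOL-Library.Extended_Real"
begin

text \<open>Tropical numbers T = R \<union> {\<infinity>} are modelled by ereal values different from -\<infinity>.  The doubled ground set J = {1..n,1*..n*} is modelled as
  pairs (i,b) with i \<in> {1..n}; (i,False) is i and (i,True) is i*.\<close>

definition symdiff :: "'a set \<Rightarrow> 'a set \<Rightarrow> 'a set" (infixl "\<Delta>" 65) where
  "A \<Delta> B = (A - B) \<union> (B - A)"

type_synonym jelt = "nat \<times> bool"

definition ground :: "nat \<Rightarrow> nat set" where
  "ground n = {1..n}"

definition Jset :: "nat \<Rightarrow> jelt set" where
  "Jset n = {1..n} \<times> (UNIV :: bool set)"

definition star :: "jelt \<Rightarrow> jelt" where
  "star k = (fst k, \<not> snd k)"

definition admissible :: "jelt set \<Rightarrow> bool" where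
  "admissible X \<longleftrightarrow> X \<inter> star ` X = {}"

definition min_twice :: "('a \<Rightarrow> ereal) \<Rightarrow> 'a set \<Rightarrow> bool" where
  "min_twice f A \<longleftrightarrow> (\<forall>i\<in>A. f i = \<infinity>) \<or>
     (\<exists>i\<in>A. \<exists>j\<in>A. i \<noteq> j \<and> f i = f j \<and> (\<forall>k\<in>A. f i \<le> f k))"

definition tropical_wick :: "nat \<Rightarrow> (nat set \<Rightarrow> ereal) \<Rightarrow> bool" where
  "tropical_wick n p \<longleftrightarrow> (\<forall>S. S \<subseteq> ground n \<longrightarrow> p S \<noteq> -\<infinity>) \<and>
     (\<forall>S T. S \<subseteq> ground n \<longrightarrow> T \<subseteq> ground n \<longrightarrow>
        min_twice (\<lambda>i. p (S \<Delta> {i}) + p (T \<Delta> {i})) (S \<Delta> T))"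

definition psupp :: "nat \<Rightarrow> (nat set \<Rightarrow> ereal) \<Rightarrow> nat set set" where
  "psupp n p = {S. S \<subseteq> ground n \<and> p S \<noteq> \<infinity>}"

definition dual_bases :: "nat \<Rightarrow> nat set set \<Rightarrow> nat set set" where
  "dual_bases n B = (\<lambda>X. ground n - X) ` B"

definition bar :: "nat \<Rightarrow> nat set \<Rightarrow> jelt set" where
  "bar n S = {(i, False) | i. i \<in> S} \<union> {(i, True) | i. i \<in> ground n - S}"

definition barp :: "(nat set \<Rightarrow> ereal) \<Rightarrow> jelt set \<Rightarrow> ereal" where
  "barp p X = p {i. (i, False) \<in> X}"

definition dependent_in :: "nat \<Rightarrow> nat set set \<Rightarrow> jelt set \<Rightarrow> bool" where
  "dependent_in n B X \<longleftrightarrow> X \<subseteq> Jset n \<and> \<not> (\<exists>b\<in>B. X \<subseteq> bar n b)"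

definition tvec :: "nat \<Rightarrow> (jelt \<Rightarrow> ereal) \<Rightarrow> bool" where
  "tvec n x \<longleftrightarrow> (\<forall>k. x k \<noteq> -\<infinity>) \<and> (\<forall>k. k \<notin> Jset n \<longrightarrow> x k = \<infinity>)"

definition vsupp :: "nat \<Rightarrow> (jelt \<Rightarrow> ereal) \<Rightarrow> jelt set" where
  "vsupp n x = {k \<in> Jset n. x k \<noteq> \<infinity>}"

definition cvec :: "nat \<Rightarrow> (nat set \<Rightarrow> ereal) \<Rightarrow> nat set \<Rightarrow> jelt \<Rightarrow> ereal" where
  "cvec n p T k = (if k \<in> Jset n \<and> k \<in> bar n T
                   then barp p (bar n T \<Delta> {k, star k}) else \<infinity>)"

definition cocvec :: "nat \<Rightarrow> (nat set \<Rightarrow> ereal) \<Rightarrow> nat set \<Rightarrow> jelt \<Rightarrow> ereal" where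
  "cocvec n p T k = (if k \<in> Jset n \<and> k \<notin> bar n T
                   then barp p (bar n T \<Delta> {k, star k}) else \<infinity>)"

definition shift :: "(jelt \<Rightarrow> ereal) \<Rightarrow> real \<Rightarrow> jelt \<Rightarrow> ereal" where
  "shift x l k = x k + ereal l"

definition circuits :: "nat \<Rightarrow> (nat set \<Rightarrow> ereal) \<Rightarrow> (jelt \<Rightarrow> ereal) set" where
  "circuits n p = {shift (cvec n p T) l | T l. T \<subseteq> ground n \<and>
                     vsupp n (shift (cvec n p T) l) \<noteq> {}}"

definition cocircuits :: "nat \<Rightarrow> (nat set \<Rightarrow> ereal) \<Rightarrow> (jelt \<Rightarrow> ereal) set" where
  "cocircuits n p = {shift (cocvec n p T) l | T l. T \<subseteq> ground n \<and>
                     vsupp n (shift (cocvec n p T) l) \<noteq> {}}"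

definition trop_orth :: "nat \<Rightarrow> (jelt \<Rightarrow> ereal) \<Rightarrow> (jelt \<Rightarrow> ereal) \<Rightarrow> bool" where
  "trop_orth n x y \<longleftrightarrow> min_twice (\<lambda>k. x k + y k) (Jset n)"

definition circ_perp :: "nat \<Rightarrow> (nat set \<Rightarrow> ereal) \<Rightarrow> (jelt \<Rightarrow> ereal) set" where
  "circ_perp n p = {x. tvec n x \<and> (\<forall>c\<in>circuits n p. trop_orth n x c)}"

definition cocycles :: "nat \<Rightarrow> (nat set \<Rightarrow> ereal) \<Rightarrow> (jelt \<Rightarrow> ereal) set" where
  "cocycles n p = {x \<in> circ_perp n p. admissible (vsupp n x)}"

end

theory Submission
  imports Defs
begin

(* In coordinates, c_S is finite only on bar S, where at position i it is p (S Delta {i}), and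
  c*_T is finite only off bar T.  In x + c_S tropical orthogonality forbids a single finite
  coordinate and equalises the two values when there are exactly two.  Pairing c*_T with c_S
  leaves exactly the positions in T Delta S, with the Wick terms as values, so cocircuits are
  cocycles.  If supp x missed bar A for a basis A, flipping A at one position k of supp x would
  give a circuit meeting supp x only in k; this is (i).  Flipping a basis A whose bar meets
  supp x least at a point of that meet yields a cocircuit supported inside supp x, and if supp x
  lies in the support of c*_T, flipping T at two of its positions k0, k balances
  x k0 + c*_T k = x k + c*_T k0, so x is a translate of c*_T.  This gives (ii) and (iii). *)

lemma min_twice_add_const:
  "min_twice (\<lambda>k. f k + ereal c) A \<longleftrightarrow> min_twice f A"
proof -
  have eq_iff: "f i + ereal c = f j + ereal c \<longleftrightarrow> f i = f j" for i j
    by (simp add: ereal_add_cancel_right)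
  have le_iff: "f i + ereal c \<le> f j + ereal c \<longleftrightarrow> f i \<le> f j" for i j
    by (simp add: ereal_add_le_add_iff2)
  have inf_iff: "f i + ereal c = \<infinity> \<longleftrightarrow> f i = \<infinity>" for i
    by (cases "f i") auto
  show ?thesis
    unfolding min_twice_def eq_iff le_iff inf_iff ..
qed

lemma min_twice_not_singleton:
  assumes "min_twice f A"
  shows "{k \<in> A. f k \<noteq> \<infinity>} \<noteq> {a}"
proof
  assume single: "{k \<in> A. f k \<noteq> \<infinity>} = {a}"
  then have a: "a \<in> A" "f a \<noteq> \<infinity>" and only_a: "\<And>k. k \<in> A \<Longrightarrow> f k \<noteq> \<infinity> \<Longrightarrow> k = a"
    by blast+
  with assms obtain i j where ij: "i \<in> A" "j \<in> A" "i \<noteq> j" "f i = f j" "\<forall>k\<in>A. f i \<le> f k"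
    unfolding min_twice_def by blast
  have "f i \<noteq> \<infinity>" using ij(5) a by (metis ereal_infty_less_eq(1))
  then have "i = a" "j = a" using only_a ij(1,2,4) by metis+
  with ij(3) show False by simp
qed

lemma min_twice_doubleton:
  assumes "min_twice f A" and pair: "{k \<in> A. f k \<noteq> \<infinity>} = {a, b}" and "a \<noteq> b"
  shows "f a = f b"
proof -
  from pair have a: "a \<in> A" "f a \<noteq> \<infinity>"
    and only_ab: "\<And>k. k \<in> A \<Longrightarrow> f k \<noteq> \<infinity> \<Longrightarrow> k = a \<or> k = b"
    by blast+
  with assms(1) obtain i j where ij: "i \<in> A" "j \<in> A" "i \<noteq> j" "f i = f j" "\<forall>k\<in>A. f i \<le> f k"
    unfolding min_twice_def by blast
  have "f i \<noteq> \<infinity>" using ij(5) a by (metis ereal_infty_less_eq(1))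
  then have "i = a \<or> i = b" "j = a \<or> j = b" using only_ab ij(1,2,4) by metis+
  then show ?thesis using ij(3,4) by auto
qed

lemma min_twice_inj_image:
  assumes inj: "inj_on h B" and image: "h ` B \<subseteq> A" and agree: "\<forall>b\<in>B. f (h b) = g b"
    and outside: "\<forall>a\<in>A - h ` B. f a = \<infinity>" and "min_twice g B"
  shows "min_twice f A"
  using \<open>min_twice g B\<close> unfolding min_twice_def
proof (elim disjE bexE conjE)
  assume "\<forall>b\<in>B. g b = \<infinity>"
  then show "(\<forall>a\<in>A. f a = \<infinity>) \<or> (\<exists>i\<in>A. \<exists>j\<in>A. i \<noteq> j \<and> f i = f j \<and> (\<forall>k\<in>A. f i \<le> f k))"
  proof (intro disjI1 ballI)
    fix a assume "a \<in> A"
    then show "f a = \<infinity>"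
      using \<open>\<forall>b\<in>B. g b = \<infinity>\<close> agree outside by (cases "a \<in> h ` B") auto
  qed
next
  fix i j assume ij: "i \<in> B" "j \<in> B" "i \<noteq> j" "g i = g j" "\<forall>k\<in>B. g i \<le> g k"
  have "f (h i) \<le> f a" if "a \<in> A" for a
    using that ij(1,5) agree outside by (cases "a \<in> h ` B") auto
  moreover have "h i \<noteq> h j" using inj ij(1-3) by (meson inj_on_eq_iff)
  moreover have "f (h i) = f (h j)" using ij(1,2,4) agree by simp
  moreover have "h i \<in> A" "h j \<in> A" using ij(1,2) image by auto
  ultimately show "(\<forall>a\<in>A. f a = \<infinity>) \<or> (\<exists>i\<in>A. \<exists>j\<in>A. i \<noteq> j \<and> f i = f j \<and> (\<forall>k\<in>A. f i \<le> f k))"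
    by blast
qed

lemma tvec_not_MInfty: "tvec n x \<Longrightarrow> x k \<noteq> - \<infinity>"
  unfolding tvec_def by blast

lemma vsupp_add:
  assumes "tvec n x" "tvec n y"
  shows "{k \<in> Jset n. x k + y k \<noteq> \<infinity>} = vsupp n x \<inter> vsupp n y"
proof -
  have "x k + y k \<noteq> \<infinity> \<longleftrightarrow> x k \<noteq> \<infinity> \<and> y k \<noteq> \<infinity>" for k
    using assms unfolding tvec_def by (cases "x k"; cases "y k") auto
  then show ?thesis by (auto simp: vsupp_def)
qed

lemma trop_orth_vsupp_not_singleton:
  assumes "tvec n x" "tvec n y" "trop_orth n x y"
  shows "vsupp n x \<inter> vsupp n y \<noteq> {a}"
  using min_twice_not_singleton[of "\<lambda>k. x k + y k"] assms(3)
  unfolding trop_orth_def vsupp_add[OF assms(1,2), symmetric] .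

lemma trop_orth_vsupp_doubleton:
  assumes "tvec n x" "tvec n y" "trop_orth n x y"
    and "vsupp n x \<inter> vsupp n y = {a, b}" "a \<noteq> b"
  shows "x a + y a = x b + y b"
  using min_twice_doubleton[of "\<lambda>k. x k + y k"] assms(3-5)
  unfolding trop_orth_def vsupp_add[OF assms(1,2), symmetric] by blast

lemma vsupp_shift [simp]: "vsupp n (shift x l) = vsupp n x"
  by (auto simp: vsupp_def shift_def)

lemma shift_shift [simp]: "shift (shift x a) b = shift x (a + b)"
  by (simp add: shift_def fun_eq_iff add.assoc)

lemma shift_zero [simp]: "shift x 0 = x"
  by (simp add: shift_def fun_eq_iff zero_ereal_def[symmetric])

lemma tvec_shift [simp]: "tvec n (shift x l) \<longleftrightarrow> tvec n x"
proof -
  have "x k + ereal l = - \<infinity> \<longleftrightarrow> x k = - \<infinity>" "x k + ereal l = \<infinity> \<longleftrightarrow> x k = \<infinity>" for k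
    by (cases "x k"; simp)+
  then show ?thesis by (simp add: tvec_def shift_def)
qed

lemma trop_orth_shift_left [simp]: "trop_orth n (shift x l) y \<longleftrightarrow> trop_orth n x y"
proof -
  have "(\<lambda>k. x k + ereal l + y k) = (\<lambda>k. x k + y k + ereal l)"
    by (simp add: fun_eq_iff ac_simps)
  then show ?thesis by (simp add: trop_orth_def shift_def min_twice_add_const)
qed

lemma trop_orth_shift_right [simp]: "trop_orth n x (shift y l) \<longleftrightarrow> trop_orth n x y"
  unfolding trop_orth_def shift_def
  by (simp add: add.assoc[symmetric] min_twice_add_const)

lemma tropical_wick_not_MInfty: "tropical_wick n p \<Longrightarrow> S \<subseteq> ground n \<Longrightarrow> p S \<noteq> - \<infinity>"
  by (simp add: tropical_wick_def)

lemma tropical_wick_min_twice: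
  "tropical_wick n p \<Longrightarrow> S \<subseteq> ground n \<Longrightarrow> T \<subseteq> ground n \<Longrightarrow>
    min_twice (\<lambda>i. p (S \<Delta> {i}) + p (T \<Delta> {i})) (S \<Delta> T)"
  by (simp add: tropical_wick_def)

lemma symdiff_singleton_subset: "S \<subseteq> ground n \<Longrightarrow> i \<in> ground n \<Longrightarrow> S \<Delta> {i} \<subseteq> ground n"
  by (auto simp: symdiff_def)

lemma symdiff_symdiff_cancel [simp]: "(A \<Delta> B) \<Delta> B = A"
  by (auto simp: symdiff_def)

lemma mem_Jset_iff: "k \<in> Jset n \<longleftrightarrow> fst k \<in> ground n"
  by (cases k) (simp add: Jset_def ground_def)

lemma mem_bar_iff: "S \<subseteq> ground n \<Longrightarrow> k \<in> bar n S \<longleftrightarrow> k \<in> Jset n \<and> (snd k \<longleftrightarrow> fst k \<notin> S)"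
  by (cases k) (auto simp: bar_def Jset_def ground_def)

lemma bar_ground_diff: "A \<subseteq> ground n \<Longrightarrow> bar n (ground n - A) = Jset n - bar n A"
  by (auto simp: mem_bar_iff mem_Jset_iff)

lemma barp_bar_flip: "S \<subseteq> ground n \<Longrightarrow> barp p (bar n S \<Delta> {k, star k}) = p (S \<Delta> {fst k})"
  unfolding barp_def
  by (cases k) (auto simp: bar_def symdiff_def star_def ground_def intro!: arg_cong[where f = p])

lemma cvec_eq:
  "S \<subseteq> ground n \<Longrightarrow> cvec n p S k = (if k \<in> bar n S then p (S \<Delta> {fst k}) else \<infinity>)"
  by (auto simp: cvec_def barp_bar_flip mem_bar_iff)

lemma cocvec_eq:
  "S \<subseteq> ground n \<Longrightarrow> cocvec n p S k = (if k \<in> Jset n - bar n S then p (S \<Delta> {fst k}) else \<infinity>)"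
  by (auto simp: cocvec_def barp_bar_flip)

lemma vsupp_cvec:
  "S \<subseteq> ground n \<Longrightarrow> vsupp n (cvec n p S) = {k \<in> bar n S. p (S \<Delta> {fst k}) \<noteq> \<infinity>}"
  by (auto simp: vsupp_def cvec_eq mem_bar_iff)

lemma vsupp_cocvec:
  "S \<subseteq> ground n \<Longrightarrow> vsupp n (cocvec n p S) = {k \<in> Jset n - bar n S. p (S \<Delta> {fst k}) \<noteq> \<infinity>}"
  by (auto simp: vsupp_def cocvec_eq)

lemma tropical_wick_flip_not_MInfty:
  "tropical_wick n p \<Longrightarrow> S \<subseteq> ground n \<Longrightarrow> i \<in> ground n \<Longrightarrow> p (S \<Delta> {i}) \<noteq> - \<infinity>"
  by (simp add: tropical_wick_not_MInfty symdiff_singleton_subset)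

lemma tvec_cvec: "tropical_wick n p \<Longrightarrow> S \<subseteq> ground n \<Longrightarrow> tvec n (cvec n p S)"
  by (auto simp: tvec_def cvec_eq mem_bar_iff mem_Jset_iff tropical_wick_flip_not_MInfty)

lemma tvec_cocvec: "tropical_wick n p \<Longrightarrow> S \<subseteq> ground n \<Longrightarrow> tvec n (cocvec n p S)"
  by (auto simp: tvec_def cocvec_eq mem_Jset_iff tropical_wick_flip_not_MInfty)

lemma circ_perp_iff:
  "x \<in> circ_perp n p \<longleftrightarrow> tvec n x \<and> (\<forall>S \<subseteq> ground n. trop_orth n x (cvec n p S))"
proof (intro iffI conjI allI impI; (elim conjE)?)
  assume x: "x \<in> circ_perp n p"
  then show "tvec n x" by (simp add: circ_perp_def)
  fix S assume S: "S \<subseteq> ground n"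
  show "trop_orth n x (cvec n p S)"
  proof (cases "vsupp n (cvec n p S) = {}")
    case True
    with \<open>tvec n x\<close> have "\<forall>k\<in>Jset n. x k + cvec n p S k = \<infinity>"
      by (auto simp: vsupp_def tvec_def)
    then show ?thesis by (simp add: trop_orth_def min_twice_def)
  next
    case False
    then have "shift (cvec n p S) 0 \<in> circuits n p"
      unfolding circuits_def using S by (intro CollectI exI[of _ S] exI[of _ 0]) simp
    with x show ?thesis by (simp add: circ_perp_def)
  qed
next
  assume "tvec n x" and "\<forall>S \<subseteq> ground n. trop_orth n x (cvec n p S)"
  then show "x \<in> circ_perp n p"
    by (auto simp: circ_perp_def circuits_def)
qed

lemma mem_cocircuits_iff:
  "c \<in> cocircuits n p \<longleftrightarrow>
    (\<exists>T l. T \<subseteq> ground n \<and> vsupp n (cocvec n p T) \<noteq> {} \<and> c = shift (cocvec n p T) l)"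
  by (auto simp: cocircuits_def)

lemma shift_in_cocircuits: "c \<in> cocircuits n p \<Longrightarrow> shift c l \<in> cocircuits n p"
  unfolding mem_cocircuits_iff by (metis shift_shift)

lemma circ_perp_vsupp_meets_bar:
  assumes wick: "tropical_wick n p" and x: "x \<in> circ_perp n p" and "vsupp n x \<noteq> {}"
    and A: "A \<in> psupp n p"
  shows "vsupp n x \<inter> bar n A \<noteq> {}"
proof
  assume disjoint: "vsupp n x \<inter> bar n A = {}"
  obtain k where k: "k \<in> vsupp n x" using \<open>vsupp n x \<noteq> {}\<close> by blast
  have AG: "A \<subseteq> ground n" and pA: "p A \<noteq> \<infinity>" using A by (auto simp: psupp_def)
  have kJ: "k \<in> Jset n" using k by (simp add: vsupp_def)
  have k_A: "k \<notin> bar n A" using k disjoint by blast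
  define S where "S = A \<Delta> {fst k}"
  have SG: "S \<subseteq> ground n" using AG kJ by (simp add: S_def symdiff_singleton_subset mem_Jset_iff)
  have "vsupp n x \<inter> vsupp n (cvec n p S) = {k}"
  proof
    have "k \<in> bar n S"
      using kJ k_A unfolding mem_bar_iff[OF SG] mem_bar_iff[OF AG] by (auto simp: S_def symdiff_def)
    then show "{k} \<subseteq> vsupp n x \<inter> vsupp n (cvec n p S)"
      using k pA by (simp add: vsupp_cvec[OF SG]) (simp add: S_def)
    show "vsupp n x \<inter> vsupp n (cvec n p S) \<subseteq> {k}"
    proof
      fix m assume "m \<in> vsupp n x \<inter> vsupp n (cvec n p S)"
      then have "m \<in> bar n S" "m \<notin> bar n A" using disjoint by (auto simp: vsupp_cvec SG)
      then show "m \<in> {k}"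
        using kJ k_A unfolding mem_bar_iff[OF SG] mem_bar_iff[OF AG]
        by (auto simp: S_def symdiff_def prod_eq_iff)
    qed
  qed
  moreover have "tvec n x" "trop_orth n x (cvec n p S)" using x SG by (auto simp: circ_perp_iff)
  ultimately show False using trop_orth_vsupp_not_singleton tvec_cvec[OF wick SG] by blast
qed

lemma circ_perp_vsupp_dependent:
  assumes "tropical_wick n p" "x \<in> circ_perp n p" "vsupp n x \<noteq> {}"
  shows "dependent_in n (dual_bases n (psupp n p)) (vsupp n x)"
  unfolding dependent_in_def
proof
  show "vsupp n x \<subseteq> Jset n" by (auto simp: vsupp_def)
  show "\<not> (\<exists>b\<in>dual_bases n (psupp n p). vsupp n x \<subseteq> bar n b)"
  proof
    assume "\<exists>b\<in>dual_bases n (psupp n p). vsupp n x \<subseteq> bar n b"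
    then obtain A where A: "A \<in> psupp n p" and "vsupp n x \<subseteq> bar n (ground n - A)"
      by (auto simp: dual_bases_def)
    then have "vsupp n x \<inter> bar n A = {}" by (auto simp: bar_ground_diff psupp_def)
    with circ_perp_vsupp_meets_bar[OF assms A] show False ..
  qed
qed

lemma admissible_iff: "admissible X \<longleftrightarrow> (\<forall>k\<in>X. star k \<notin> X)"
  by (auto simp: admissible_def)

lemma admissible_subset: "admissible Y \<Longrightarrow> X \<subseteq> Y \<Longrightarrow> admissible X"
  by (auto simp: admissible_def)

lemma admissible_Jset_diff_bar: "S \<subseteq> ground n \<Longrightarrow> admissible (Jset n - bar n S)"
  by (auto simp: admissible_def mem_bar_iff mem_Jset_iff star_def)

lemma trop_orth_cocvec_cvec:
  assumes wick: "tropical_wick n p" and T: "T \<subseteq> ground n" and S: "S \<subseteq> ground n"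
  shows "trop_orth n (cocvec n p T) (cvec n p S)"
  unfolding trop_orth_def
proof (rule min_twice_inj_image[OF _ _ _ _ tropical_wick_min_twice[OF wick T S]])
  let ?h = "\<lambda>i. (i, i \<in> T)"
  show "inj_on ?h (T \<Delta> S)" by (auto intro: inj_onI)
  show "?h ` (T \<Delta> S) \<subseteq> Jset n" using T S by (auto simp: mem_Jset_iff symdiff_def)
  show "\<forall>i\<in>T \<Delta> S. cocvec n p T (?h i) + cvec n p S (?h i) = p (T \<Delta> {i}) + p (S \<Delta> {i})"
    using T S by (auto simp: cocvec_eq cvec_eq mem_bar_iff mem_Jset_iff symdiff_def)
  show "\<forall>k\<in>Jset n - ?h ` (T \<Delta> S). cocvec n p T k + cvec n p S k = \<infinity>"
  proof
    fix k assume k: "k \<in> Jset n - ?h ` (T \<Delta> S)"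
    have "k \<notin> Jset n - bar n T \<or> k \<notin> bar n S"
    proof (rule ccontr)
      assume "\<not> ?thesis"
      then have "fst k \<in> T \<Delta> S" "k = ?h (fst k)"
        using T S by (auto simp: mem_bar_iff symdiff_def prod_eq_iff)
      with k show False by blast
    qed
    moreover have "cocvec n p T k \<noteq> - \<infinity>" "cvec n p S k \<noteq> - \<infinity>"
      using tvec_cocvec[OF wick T] tvec_cvec[OF wick S] by (simp_all add: tvec_not_MInfty)
    ultimately show "cocvec n p T k + cvec n p S k = \<infinity>"
      using T S by (auto simp: cocvec_eq cvec_eq)
  qed
qed

lemma cocircuits_subset_cocycles:
  assumes wick: "tropical_wick n p"
  shows "cocircuits n p \<subseteq> cocycles n p"
proof
  fix c assume "c \<in> cocircuits n p"
  then obtain T l where T: "T \<subseteq> ground n" and c: "c = shift (cocvec n p T) l"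
    by (auto simp: mem_cocircuits_iff)
  have "c \<in> circ_perp n p"
    using tvec_cocvec[OF wick T] trop_orth_cocvec_cvec[OF wick T]
    by (simp add: c circ_perp_iff)
  moreover have "admissible (vsupp n c)"
    using admissible_Jset_diff_bar[OF T] by (rule admissible_subset) (auto simp: c vsupp_cocvec T)
  ultimately show "c \<in> cocycles n p" by (simp add: cocycles_def)
qed

lemma cocycle_vsupp_contains_cocircuit:
  assumes wick: "tropical_wick n p" and "psupp n p \<noteq> {}"
    and x: "x \<in> cocycles n p" and "vsupp n x \<noteq> {}"
  shows "\<exists>c\<in>cocircuits n p. vsupp n c \<subseteq> vsupp n x"
proof -
  have xp: "x \<in> circ_perp n p" and no_star: "\<And>k. k \<in> vsupp n x \<Longrightarrow> star k \<notin> vsupp n x"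
    using x by (auto simp: cocycles_def admissible_iff)
  define Q where "Q A = vsupp n x \<inter> bar n A" for A
  have finite_Q: "finite (Q A)" for A
    by (rule finite_subset[of _ "Jset n"]) (auto simp: Q_def vsupp_def Jset_def)
  obtain A0 where "A0 \<in> psupp n p" using \<open>psupp n p \<noteq> {}\<close> by blast
  then obtain A where A: "A \<in> psupp n p"
    and A_min: "\<And>A'. A' \<in> psupp n p \<Longrightarrow> card (Q A) \<le> card (Q A')"
    using ex_has_least_nat[of "\<lambda>A. A \<in> psupp n p" A0 "\<lambda>A. card (Q A)"] by blast
  have AG: "A \<subseteq> ground n" and pA: "p A \<noteq> \<infinity>" using A by (auto simp: psupp_def)
  obtain k where k: "k \<in> Q A"
    using circ_perp_vsupp_meets_bar[OF wick xp \<open>vsupp n x \<noteq> {}\<close> A] by (auto simp: Q_def)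
  then have kx: "k \<in> vsupp n x" and kJ: "k \<in> Jset n" and k_bar: "snd k \<longleftrightarrow> fst k \<notin> A"
    by (auto simp: Q_def mem_bar_iff[OF AG])
  define T where "T = A \<Delta> {fst k}"
  have TG: "T \<subseteq> ground n" using AG kJ by (simp add: T_def symdiff_singleton_subset mem_Jset_iff)
  have "k \<notin> bar n T" using k_bar by (simp add: mem_bar_iff[OF TG]) (auto simp: T_def symdiff_def)
  then have k_T: "k \<in> vsupp n (cocvec n p T)"
    using kJ pA by (simp add: vsupp_cocvec[OF TG]) (simp add: T_def)
  have "vsupp n (cocvec n p T) \<subseteq> vsupp n x"
  proof
    fix k' assume k'_T: "k' \<in> vsupp n (cocvec n p T)"
    then have k'J: "k' \<in> Jset n" and k'_bar: "snd k' \<longleftrightarrow> fst k' \<in> T"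
      and pA': "p (T \<Delta> {fst k'}) \<noteq> \<infinity>"
      by (auto simp: vsupp_cocvec[OF TG] mem_bar_iff[OF TG])
    show "k' \<in> vsupp n x"
    proof (rule ccontr)
      assume k'x: "k' \<notin> vsupp n x"
      have "fst k' \<noteq> fst k"
      proof
        assume same: "fst k' = fst k"
        then have "snd k' = snd k" using k_bar k'_bar by (auto simp: T_def symdiff_def)
        with same have "k' = k" by (simp add: prod_eq_iff)
        with kx k'x show False by simp
      qed
      define A' where "A' = T \<Delta> {fst k'}"
      have A'G: "A' \<subseteq> ground n" using TG k'J by (simp add: A'_def symdiff_singleton_subset mem_Jset_iff)
      have "A' \<in> psupp n p" using A'G pA' by (simp add: psupp_def A'_def)
      \<comment> \<open>bar A' differs from bar A only at the positions of k and k', where it picks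
        star k and k'; neither lies in the support of x.\<close>
      have "Q A' \<subseteq> Q A - {k}"
      proof
        fix m assume "m \<in> Q A'"
        then have mx: "m \<in> vsupp n x" and mJ: "m \<in> Jset n" and m_bar: "snd m \<longleftrightarrow> fst m \<notin> A'"
          by (auto simp: Q_def mem_bar_iff[OF A'G])
        have "m \<noteq> star k" using no_star[OF kx] mx by blast
        moreover have "m \<noteq> k'" using k'x mx by blast
        ultimately show "m \<in> Q A - {k}"
          using mx mJ m_bar k_bar k'_bar \<open>fst k' \<noteq> fst k\<close>
          by (auto simp: Q_def mem_bar_iff[OF AG] A'_def T_def symdiff_def star_def prod_eq_iff)
      qed
      with k have "Q A' \<subset> Q A" by blast
      then have "card (Q A') < card (Q A)" by (rule psubset_card_mono[OF finite_Q])
      with A_min[OF \<open>A' \<in> psupp n p\<close>] show False by simp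
    qed
  qed
  moreover have "cocvec n p T \<in> cocircuits n p"
    unfolding mem_cocircuits_iff using TG k_T by (metis empty_iff shift_zero)
  ultimately show ?thesis by blast
qed

lemma tvec_eq_PInfty_iff: "tvec n x \<Longrightarrow> x k = \<infinity> \<longleftrightarrow> k \<notin> vsupp n x"
  unfolding tvec_def vsupp_def by blast

lemma shift_if_balanced:
  assumes x: "tvec n x" and c: "tvec n c" and same_vsupp: "vsupp n x = vsupp n c"
    and k0: "k0 \<in> vsupp n c" and balanced: "\<forall>k\<in>vsupp n c. x k0 + c k = x k + c k0"
  shows "x = shift c (real_of_ereal (x k0) - real_of_ereal (c k0))"
proof
  fix k
  show "x k = shift c (real_of_ereal (x k0) - real_of_ereal (c k0)) k"
  proof (cases "k \<in> vsupp n c")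
    case True
    then have "x k0 \<noteq> \<infinity>" "x k \<noteq> \<infinity>" "c k0 \<noteq> \<infinity>" "c k \<noteq> \<infinity>"
      using k0 same_vsupp by (auto simp: vsupp_def)
    moreover have "x k0 \<noteq> - \<infinity>" "x k \<noteq> - \<infinity>" "c k0 \<noteq> - \<infinity>" "c k \<noteq> - \<infinity>"
      using x c by (simp_all add: tvec_not_MInfty)
    moreover have "x k0 + c k = x k + c k0" using balanced True by blast
    ultimately show ?thesis
      by (cases "x k0"; cases "x k"; cases "c k0"; cases "c k") (auto simp: shift_def)
  next
    case False
    then have "x k = \<infinity>" "c k = \<infinity>"
      using x c same_vsupp by (simp_all add: tvec_eq_PInfty_iff)
    then show ?thesis by (simp add: shift_def)
  qed
qed

lemma circ_perp_cocvec_balanced: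
  assumes wick: "tropical_wick n p" and x: "x \<in> circ_perp n p" and T: "T \<subseteq> ground n"
    and x_T: "vsupp n x \<subseteq> vsupp n (cocvec n p T)"
    and k0: "k0 \<in> vsupp n x" and k: "k \<in> vsupp n (cocvec n p T)"
  shows "k \<in> vsupp n x \<and> x k0 + cocvec n p T k = x k + cocvec n p T k0"
proof (cases "fst k = fst k0")
  case True
  have "k0 \<in> Jset n - bar n T" "k \<in> Jset n - bar n T" using k0 x_T k by (auto simp: vsupp_cocvec[OF T])
  with True have "k = k0" by (auto simp: mem_bar_iff[OF T] prod_eq_iff)
  with k0 show ?thesis by simp
next
  case False
  have k0J: "k0 \<in> Jset n" and kJ: "k \<in> Jset n" and k0_T: "k0 \<in> vsupp n (cocvec n p T)"
    using k0 k x_T by (auto simp: vsupp_def)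
  define S where "S = T \<Delta> {fst k0} \<Delta> {fst k}"
  have SG: "S \<subseteq> ground n"
    using T k0J kJ by (simp add: S_def symdiff_singleton_subset mem_Jset_iff)
  have S_k0: "S \<Delta> {fst k0} = T \<Delta> {fst k}" and S_k: "S \<Delta> {fst k} = T \<Delta> {fst k0}"
    using False by (auto simp: S_def symdiff_def)
  have k0_S: "k0 \<in> bar n S" and k_S: "k \<in> bar n S"
    using k0_T k False
    by (simp_all add: vsupp_cocvec[OF T] mem_bar_iff[OF T] mem_bar_iff[OF SG])
      (auto simp: S_def symdiff_def)
  have cvec_k0: "cvec n p S k0 = cocvec n p T k" and cvec_k: "cvec n p S k = cocvec n p T k0"
    using k0_S k_S k k0_T by (auto simp: cvec_eq[OF SG] cocvec_eq[OF T] vsupp_cocvec[OF T] S_k0 S_k)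
  have meet: "vsupp n x \<inter> vsupp n (cvec n p S) = insert k0 ({k} \<inter> vsupp n x)"
  proof
    show "insert k0 ({k} \<inter> vsupp n x) \<subseteq> vsupp n x \<inter> vsupp n (cvec n p S)"
      using k0 k0_T k cvec_k0 cvec_k k0J kJ by (auto simp: vsupp_def)
    show "vsupp n x \<inter> vsupp n (cvec n p S) \<subseteq> insert k0 ({k} \<inter> vsupp n x)"
    proof
      fix m assume m: "m \<in> vsupp n x \<inter> vsupp n (cvec n p S)"
      then have "m \<notin> bar n T" "m \<in> bar n S" "k0 \<in> Jset n - bar n T" "k \<in> Jset n - bar n T"
        using x_T k0_T k by (auto simp: vsupp_cocvec[OF T] vsupp_cvec[OF SG])
      then have "m = k0 \<or> m = k"
        by (simp add: mem_bar_iff[OF T] mem_bar_iff[OF SG]) (auto simp: S_def symdiff_def prod_eq_iff)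
      then show "m \<in> insert k0 ({k} \<inter> vsupp n x)" using m by blast
    qed
  qed
  have tvecs: "tvec n x" "tvec n (cvec n p S)" and orth: "trop_orth n x (cvec n p S)"
    using x wick SG by (auto simp: circ_perp_iff tvec_cvec)
  have kx: "k \<in> vsupp n x"
  proof (rule ccontr)
    assume "k \<notin> vsupp n x"
    with meet have "vsupp n x \<inter> vsupp n (cvec n p S) = {k0}" by simp
    with trop_orth_vsupp_not_singleton[OF tvecs orth] show False by blast
  qed
  then have "vsupp n x \<inter> vsupp n (cvec n p S) = {k0, k}" "k0 \<noteq> k"
    using meet False by auto
  then have "x k0 + cvec n p S k0 = x k + cvec n p S k"
    by (rule trop_orth_vsupp_doubleton[OF tvecs orth])
  with kx show ?thesis by (simp add: cvec_k0 cvec_k)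
qed

lemma circ_perp_eq_shift_cocvec:
  assumes wick: "tropical_wick n p" and x: "x \<in> circ_perp n p" and "vsupp n x \<noteq> {}"
    and T: "T \<subseteq> ground n" and x_T: "vsupp n x \<subseteq> vsupp n (cocvec n p T)"
  shows "\<exists>l. x = shift (cocvec n p T) l"
proof -
  obtain k0 where k0: "k0 \<in> vsupp n x" using \<open>vsupp n x \<noteq> {}\<close> by blast
  note balanced = circ_perp_cocvec_balanced[OF wick x T x_T k0]
  have "vsupp n x = vsupp n (cocvec n p T)" using x_T balanced by blast
  moreover have "tvec n x" using x by (simp add: circ_perp_iff)
  ultimately show ?thesis
    using shift_if_balanced[OF _ tvec_cocvec[OF wick T]] k0 balanced by blast
qed

lemma circ_perp_eq_shift_cocircuit:
  assumes wick: "tropical_wick n p" and x: "x \<in> circ_perp n p" and "vsupp n x \<noteq> {}"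
    and c: "c \<in> cocircuits n p" and x_c: "vsupp n x \<subseteq> vsupp n c"
  shows "\<exists>l. x = shift c l"
proof -
  obtain T l0 where T: "T \<subseteq> ground n" and c_eq: "c = shift (cocvec n p T) l0"
    using c by (auto simp: mem_cocircuits_iff)
  then obtain l where "x = shift (cocvec n p T) l"
    using circ_perp_eq_shift_cocvec[OF wick x \<open>vsupp n x \<noteq> {}\<close> T] x_c by auto
  then have "x = shift c (l - l0)" by (simp add: c_eq)
  then show ?thesis ..
qed

lemma vsupp_cocircuit_nonempty: "c \<in> cocircuits n p \<Longrightarrow> vsupp n c \<noteq> {}"
  by (auto simp: mem_cocircuits_iff)

lemma cocircuits_same_vsupp_shift:
  assumes "tropical_wick n p" "c1 \<in> cocircuits n p" "c2 \<in> cocircuits n p" "vsupp n c1 = vsupp n c2"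
  shows "\<exists>l. c1 = shift c2 l"
  using assms cocircuits_subset_cocycles[OF assms(1)] vsupp_cocircuit_nonempty[OF assms(2)]
  by (intro circ_perp_eq_shift_cocircuit) (auto simp: cocycles_def)

lemma minimal_cocycles_eq_cocircuits:
  assumes wick: "tropical_wick n p" and "psupp n p \<noteq> {}"
  shows "{x \<in> cocycles n p. vsupp n x \<noteq> {} \<and>
            (\<forall>y \<in> cocycles n p. vsupp n y \<noteq> {} \<longrightarrow> \<not> vsupp n y \<subset> vsupp n x)}
         = cocircuits n p" (is "?minimal = _")
proof
  have shift_of_cocircuit: "\<exists>l. y = shift c l"
    if "y \<in> cocycles n p" "vsupp n y \<noteq> {}" "c \<in> cocircuits n p" "vsupp n y \<subseteq> vsupp n c" for y c
    using that circ_perp_eq_shift_cocircuit[OF wick] by (auto simp: cocycles_def)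
  show "?minimal \<subseteq> cocircuits n p"
  proof
    fix x assume "x \<in> ?minimal"
    then have x: "x \<in> cocycles n p" "vsupp n x \<noteq> {}"
      and minimal: "\<And>y. y \<in> cocycles n p \<Longrightarrow> vsupp n y \<noteq> {} \<Longrightarrow> \<not> vsupp n y \<subset> vsupp n x"
      by auto
    obtain c where c: "c \<in> cocircuits n p" "vsupp n c \<subseteq> vsupp n x"
      using cocycle_vsupp_contains_cocircuit[OF wick \<open>psupp n p \<noteq> {}\<close> x] by blast
    then have "vsupp n c = vsupp n x"
      using minimal cocircuits_subset_cocycles[OF wick] vsupp_cocircuit_nonempty by blast
    then obtain l where "x = shift c l" using shift_of_cocircuit x c by blast
    then show "x \<in> cocircuits n p" using c by (simp add: shift_in_cocircuits)
  qed
  show "cocircuits n p \<subseteq> ?minimal"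
  proof
    fix c assume c: "c \<in> cocircuits n p"
    have "\<not> vsupp n y \<subset> vsupp n c" if "y \<in> cocycles n p" "vsupp n y \<noteq> {}" for y
      using shift_of_cocircuit[OF that c] by auto
    then show "c \<in> ?minimal"
      using c cocircuits_subset_cocycles[OF wick] vsupp_cocircuit_nonempty by blast
  qed
qed

theorem proposition6p6:
  fixes n :: nat and p :: "nat set \<Rightarrow> ereal"
  assumes wick: "tropical_wick n p"
    and nonempty: "psupp n p \<noteq> {}"
  shows "(\<forall>x \<in> circ_perp n p. vsupp n x \<noteq> {} \<longrightarrow>
            dependent_in n (dual_bases n (psupp n p)) (vsupp n x))
       \<and> {x \<in> cocycles n p. vsupp n x \<noteq> {} \<and>
            (\<forall>y \<in> cocycles n p. vsupp n y \<noteq> {} \<longrightarrow> \<not> vsupp n y \<subset> vsupp n x)}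
           = cocircuits n p
       \<and> (\<forall>c1 \<in> cocircuits n p. \<forall>c2 \<in> cocircuits n p.
            vsupp n c1 = vsupp n c2 \<longrightarrow> (\<exists>l::real. c1 = shift c2 l))"
  using circ_perp_vsupp_dependent[OF wick] minimal_cocycles_eq_cocircuits[OF wick nonempty]
    cocircuits_same_vsupp_shift[OF wick] by blast

end
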